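(* Let $\Pi=(\iota,\tau,\beta)$ be a safety problem. If $\Pi$ has a proof in the incremental forward proof system $\mathbf{FI}$, then $\Pi$ is safe.
   Context: A first-order vocabulary $\Sigma$ consists of constant, function and relation symbols; $\Sigma'=\{a' : a\in\Sigma\}$ is a disjoint copy of it, and for a formula $\varphi$ over $\Sigma$, $\varphi'$ denotes $\varphi$ with every symbol of $\Sigma$ replaced by its primed copy. A state is a first-order structure over $\Sigma$. A safety problem is a triple $(\iota,\tau,\beta)$, where $\iota$ (initial states) and $\beta$ (bad states) are closed formulas over $\Sigma$ and $\tau$ (transitions) is a closed formula over $\Sigma\uplus\Sigma'$. A pair of states $(s,t)$ over a common domain is a transition if the structure over $\Sigma\uplus\Sigma'$ interpreting $\Sigma$ as in $s$ and $\Sigma'$ as in $t$ satisfies $\tau$. A trace is a finite sequence of states over a common domain in which every two consecutive states form a transition. The problem is safe if there is no trace $s_0,\dots,s_k$ with $s_0\models\iota$ and $s_k\models\beta$. Throughout, $A\Rightarrow B$ means that the implication $A\to B$ is valid. Proofs: the statements of a proof system are safety problems. A proof of $\Pi$ in a system is a finite tree whose nodes are safety problems, whose root is $\Pi$, and in which each node together with its children is an instance of one of the system's inference rules, with side conditions valid. The system $\mathbf{FI}$ has the following rules, where $\varphi$ ranges over closed formulas over $\Sigma$: (Ind): no premises; conclusion $(\iota,\tau,\neg\varphi)$; side conditions $\iota\Rightarrow\varphi$ and $\varphi\wedge\tau\Rightarrow\varphi'$. (Cons): premise $(\iota,\tau,\neg\varphi)$; conclusion $(\iota,\tau,\beta)$;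 side condition $\varphi\Rightarrow\neg\beta$. (Inc): premises $(\iota,\tau,\neg\varphi)$ and $(\iota\wedge\varphi,\ \tau\wedge\varphi\wedge\varphi',\ \beta\wedge\varphi)$; conclusion $(\iota,\tau,\beta)$. *)

theory Defs
  imports Main
begin

text \<open>Function symbols (constants are 0-ary function symbols) have type 'f,
  relation symbols have type 'r.  Variables are natural numbers.\<close>

datatype 'f trm = Var nat | App 'f "'f trm list"

datatype ('f, 'r) fm =
    FF
  | Eq "'f trm" "'f trm"
  | Rel 'r "'f trm list"
  | Neg "('f, 'r) fm"
  | Conj "('f, 'r) fm" "('f, 'r) fm"
  | Ex nat "('f, 'r) fm"

definition Imp :: "('f, 'r) fm \<Rightarrow> ('f, 'r) fm \<Rightarrow> ('f, 'r) fm" where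
  "Imp A B = Neg (Conj A (Neg B))"

fun fvt :: "'f trm \<Rightarrow> nat set" where
  "fvt (Var x) = {x}"
| "fvt (App f ts) = (\<Union>t\<in>set ts. fvt t)"

fun fv :: "('f, 'r) fm \<Rightarrow> nat set" where
  "fv FF = {}"
| "fv (Eq s t) = fvt s \<union> fvt t"
| "fv (Rel r ts) = (\<Union>t\<in>set ts. fvt t)"
| "fv (Neg A) = fv A"
| "fv (Conj A B) = fv A \<union> fv B"
| "fv (Ex x A) = fv A - {x}"

definition closed :: "('f, 'r) fm \<Rightarrow> bool" where
  "closed A \<longleftrightarrow> fv A = {}"

record ('f, 'r, 'a) struct =
  Fn :: "'f \<Rightarrow> 'a list \<Rightarrow> 'a"
  Rl :: "'r \<Rightarrow> 'a list \<Rightarrow> bool"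

fun evalt :: "('f, 'r, 'a) struct \<Rightarrow> (nat \<Rightarrow> 'a) \<Rightarrow> 'f trm \<Rightarrow> 'a" where
  "evalt S e (Var x) = e x"
| "evalt S e (App f ts) = Fn S f (map (evalt S e) ts)"

fun sat :: "('f, 'r, 'a) struct \<Rightarrow> (nat \<Rightarrow> 'a) \<Rightarrow> ('f, 'r) fm \<Rightarrow> bool" where
  "sat S e FF = False"
| "sat S e (Eq s t) = (evalt S e s = evalt S e t)"
| "sat S e (Rel r ts) = Rl S r (map (evalt S e) ts)"
| "sat S e (Neg A) = (\<not> sat S e A)"
| "sat S e (Conj A B) = (sat S e A \<and> sat S e B)"
| "sat S e (Ex x A) = (\<exists>a. sat S (e(x := a)) A)"

definition holds :: "('f, 'r, 'a) struct \<Rightarrow> ('f, 'r) fm \<Rightarrow> bool" where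
  "holds S A \<longleftrightarrow> (\<forall>e. sat S e A)"

definition valid :: "'a itself \<Rightarrow> ('f, 'r) fm \<Rightarrow> bool" where
  "valid T A \<longleftrightarrow> (\<forall>(S :: ('f, 'r, 'a) struct). holds S A)"

definition entails :: "'a itself \<Rightarrow> ('f, 'r) fm \<Rightarrow> ('f, 'r) fm \<Rightarrow> bool" where
  "entails T A B \<longleftrightarrow> valid T (Imp A B)"

text \<open>Symbol (s, False) is s in \<Sigma>, symbol (s, True) is its primed copy s'.\<close>

definition unp :: "('f, 'r) fm \<Rightarrow> ('f \<times> bool, 'r \<times> bool) fm" where
  "unp A = map_fm (\<lambda>f. (f, False)) (\<lambda>r. (r, False)) A"

definition prm :: "('f, 'r) fm \<Rightarrow> ('f \<times> bool, 'r \<times> bool) fm" where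
  "prm A = map_fm (\<lambda>f. (f, True)) (\<lambda>r. (r, True)) A"

definition joint :: "('f, 'r, 'a) struct \<Rightarrow> ('f, 'r, 'a) struct \<Rightarrow> ('f \<times> bool, 'r \<times> bool, 'a) struct" where
  "joint s t = \<lparr> Fn = (\<lambda>(f, b). if b then Fn t f else Fn s f),
                Rl = (\<lambda>(r, b). if b then Rl t r else Rl s r) \<rparr>"

type_synonym ('f, 'r) problem =
  "('f, 'r) fm \<times> ('f \<times> bool, 'r \<times> bool) fm \<times> ('f, 'r) fm"

definition safety_problem :: "('f, 'r) problem \<Rightarrow> bool" where
  "safety_problem P \<longleftrightarrow> (case P of (\<iota>, \<tau>, \<beta>) \<Rightarrow> closed \<iota> \<and> closed \<tau> \<and> closed \<beta>)"

definition is_transition :: "('f \<times> bool, 'r \<times> bool) fm \<Rightarrow> ('f, 'r, 'a) struct \<Rightarrow> ('f, 'r, 'a) struct \<Rightarrow> bool" where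
  "is_transition \<tau> s t \<longleftrightarrow> holds (joint s t) \<tau>"

definition is_trace :: "('f \<times> bool, 'r \<times> bool) fm \<Rightarrow> ('f, 'r, 'a) struct list \<Rightarrow> bool" where
  "is_trace \<tau> ss \<longleftrightarrow> ss \<noteq> [] \<and> (\<forall>i. Suc i < length ss \<longrightarrow> is_transition \<tau> (ss ! i) (ss ! Suc i))"

definition safe :: "'a itself \<Rightarrow> ('f, 'r) problem \<Rightarrow> bool" where
  "safe T P \<longleftrightarrow> (case P of (\<iota>, \<tau>, \<beta>) \<Rightarrow>
     \<not> (\<exists>ss :: ('f, 'r, 'a) struct list. is_trace \<tau> ss \<and> holds (hd ss) \<iota> \<and> holds (last ss) \<beta>))"

inductive FI :: "'a itself \<Rightarrow> ('f, 'r) problem \<Rightarrow> bool" for T :: "'a itself" where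
  Ind: "\<lbrakk> closed \<phi>; entails T \<iota> \<phi>; entails T (Conj (unp \<phi>) \<tau>) (prm \<phi>) \<rbrakk>
        \<Longrightarrow> FI T (\<iota>, \<tau>, Neg \<phi>)"
| Cons: "\<lbrakk> closed \<phi>; FI T (\<iota>, \<tau>, Neg \<phi>); entails T \<phi> (Neg \<beta>) \<rbrakk>
        \<Longrightarrow> FI T (\<iota>, \<tau>, \<beta>)"
| Inc: "\<lbrakk> closed \<phi>; FI T (\<iota>, \<tau>, Neg \<phi>);
          FI T (Conj \<iota> \<phi>, Conj (Conj \<tau> (unp \<phi>)) (prm \<phi>), Conj \<beta> \<phi>) \<rbrakk>
        \<Longrightarrow> FI T (\<iota>, \<tau>, \<beta>)"

end

theory Submission
  imports Defs
begin

text \<open>Every state reachable from \<open>\<iota>\<close> along \<open>\<tau>\<close> fails \<open>\<beta>\<close>; this is shown by induction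
  on the FI derivation. In (Ind), \<open>\<phi>\<close> is an inductive invariant and thus holds in every reachable
  state; (Cons) just weakens. In (Inc), the first premise makes the closed formula \<open>\<phi>\<close> hold in every
  reachable state, so each such state is also reachable in the strengthened problem of the
  second premise, where it fails \<open>\<beta> \<and> \<phi>\<close> and hence \<open>\<beta>\<close>.\<close>

lemma evalt_cong: "(\<forall>x\<in>fvt t. e x = e' x) \<Longrightarrow> evalt S e t = evalt S e' t"
  by (induction t) (auto intro!: arg_cong[where f = "Fn S _"])

lemma sat_cong: "(\<forall>x\<in>fv A. e x = e' x) \<Longrightarrow> sat S e A = sat S e' A"
proof (induction A arbitrary: e e')
  case (Eq s t)
  then show ?case using evalt_cong[of s e e' S] evalt_cong[of t e e' S] by simp
next
  case (Rel r ts)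
  then have "map (evalt S e) ts = map (evalt S e') ts"
    by (auto intro!: evalt_cong)
  then show ?case by (simp only: sat.simps)
next
  case (Conj A B)
  then have "sat S e A = sat S e' A" and "sat S e B = sat S e' B"
    by simp_all
  then show ?case by simp
next
  case (Ex x A)
  then have "sat S (e(x := a)) A = sat S (e'(x := a)) A" for a
    by simp
  then show ?case by simp
qed auto

lemma holds_iff_sat_if_closed: "closed A \<Longrightarrow> holds S A \<longleftrightarrow> sat S e A"
  unfolding holds_def closed_def using sat_cong[of A] by auto

lemma holds_Conj [simp]: "holds S (Conj A B) \<longleftrightarrow> holds S A \<and> holds S B"
  by (auto simp: holds_def)

lemma not_holds_Neg_if_holds: "holds S A \<Longrightarrow> \<not> holds S (Neg A)"
  by (simp add: holds_def)

lemma entailsD: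
  fixes S :: "('f, 'r, 'a) struct"
  assumes "entails (T :: 'a itself) A B" and "sat S e A"
  shows "sat S e B"
  using assms unfolding entails_def valid_def holds_def Imp_def by auto

lemma Fn_joint [simp]: "Fn (joint s t) (f, False) = Fn s f" "Fn (joint s t) (f, True) = Fn t f"
  by (simp_all add: joint_def)

lemma Rl_joint [simp]: "Rl (joint s t) (r, False) = Rl s r" "Rl (joint s t) (r, True) = Rl t r"
  by (simp_all add: joint_def)

lemma evalt_joint_unp: "evalt (joint s t) e (map_trm (\<lambda>f. (f, False)) u) = evalt s e u"
  by (induction u) (auto simp: comp_def intro!: arg_cong[where f = "Fn s _"])

lemma evalt_joint_prm: "evalt (joint s t) e (map_trm (\<lambda>f. (f, True)) u) = evalt t e u"
  by (induction u) (auto simp: comp_def intro!: arg_cong[where f = "Fn t _"])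

lemma sat_joint_unp [simp]: "sat (joint s t) e (unp A) = sat s e A"
  unfolding unp_def by (induction A arbitrary: e) (auto simp: evalt_joint_unp comp_def)

lemma sat_joint_prm [simp]: "sat (joint s t) e (prm A) = sat t e A"
  unfolding prm_def by (induction A arbitrary: e) (auto simp: evalt_joint_prm comp_def)

lemma holds_joint_unp [simp]: "holds (joint s t) (unp A) \<longleftrightarrow> holds s A"
  by (simp add: holds_def)

lemma holds_joint_prm [simp]: "holds (joint s t) (prm A) \<longleftrightarrow> holds t A"
  by (simp add: holds_def)

inductive reachable ::
  "('f, 'r) fm \<Rightarrow> ('f \<times> bool, 'r \<times> bool) fm \<Rightarrow> ('f, 'r, 'a) struct \<Rightarrow> bool"
  for \<iota> \<tau> where
  init: "holds s \<iota> \<Longrightarrow> reachable \<iota> \<tau> s"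
| step: "reachable \<iota> \<tau> s \<Longrightarrow> is_transition \<tau> s t \<Longrightarrow> reachable \<iota> \<tau> t"

lemma reachable_nth_trace:
  assumes "is_trace \<tau> ss" and "holds (hd ss) \<iota>" and "i < length ss"
  shows "reachable \<iota> \<tau> (ss ! i)"
  using assms(3)
proof (induction i)
  case 0
  then show ?case using assms(2) by (simp add: hd_conv_nth reachable.init)
next
  case (Suc i)
  then show ?case using assms(1) by (auto simp: is_trace_def intro: reachable.step)
qed

lemma safe_if_reachable_not_holds:
  assumes "\<And>s :: ('f, 'r, 'a) struct. reachable \<iota> \<tau> s \<Longrightarrow> \<not> holds s \<beta>"
  shows "safe (T :: 'a itself) (\<iota>, \<tau>, \<beta>)"
proof -
  have "\<not> holds (last ss) \<beta>" if "is_trace \<tau> ss" and "holds (hd ss) \<iota>"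
    for ss :: "('f, 'r, 'a) struct list"
  proof -
    have "ss \<noteq> []" using that(1) by (simp add: is_trace_def)
    then have "reachable \<iota> \<tau> (last ss)"
      using reachable_nth_trace[OF that] by (simp add: last_conv_nth)
    then show ?thesis by (rule assms)
  qed
  then show ?thesis by (auto simp: safe_def)
qed

lemma invariant_holds_if_reachable:
  assumes "entails (T :: 'a itself) \<iota> \<phi>" and "entails T (Conj (unp \<phi>) \<tau>) (prm \<phi>)"
    and "reachable \<iota> \<tau> (s :: ('f, 'r, 'a) struct)"
  shows "holds s \<phi>"
  using assms(3)
proof induction
  case (init s)
  then show ?case using entailsD[OF assms(1)] by (auto simp: holds_def)
next
  case (step s t)
  then have "holds (joint s t) (Conj (unp \<phi>) \<tau>)"
    by (simp add: is_transition_def)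
  then show ?case
    by (metis entailsD[OF assms(2)] holds_def sat_joint_prm)
qed

lemma reachable_restrict_to_invariant:
  fixes s :: "('f, 'r, 'a) struct"
  assumes "\<And>s :: ('f, 'r, 'a) struct. reachable \<iota> \<tau> s \<Longrightarrow> holds s \<phi>" and "reachable \<iota> \<tau> s"
  shows "reachable (Conj \<iota> \<phi>) (Conj (Conj \<tau> (unp \<phi>)) (prm \<phi>)) s"
  using assms(2)
proof induction
  case (init s)
  moreover have "holds s \<phi>" using init by (intro assms(1) reachable.init)
  ultimately show ?case by (intro reachable.init) simp
next
  case (step s t)
  then have "is_transition (Conj (Conj \<tau> (unp \<phi>)) (prm \<phi>)) s t"
    using assms(1) reachable.step by (fastforce simp: is_transition_def)
  with step.IH show ?case by (rule reachable.step)
qed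

lemma FI_reachable_not_holds:
  assumes "FI (T :: 'a itself) (\<iota>, \<tau>, \<beta>)" and "reachable \<iota> \<tau> (s :: ('f, 'r, 'a) struct)"
  shows "\<not> holds s \<beta>"
  using assms
proof (induction "(\<iota>, \<tau>, \<beta>)" arbitrary: \<iota> \<tau> \<beta> s rule: FI.induct)
  case (Ind \<phi> \<iota> \<tau>)
  then show ?case by (intro not_holds_Neg_if_holds invariant_holds_if_reachable)
next
  case (Cons \<phi> \<iota> \<tau> \<beta>)
  then obtain e where "sat s e \<phi>" by (auto simp: holds_def)
  then have "sat s e (Neg \<beta>)" using entailsD[OF Cons.hyps(4)] by blast
  then show ?case by (auto simp: holds_def)
next
  case (Inc \<phi> \<iota> \<tau> \<beta>)
  have "holds s' \<phi>" if "reachable \<iota> \<tau> s'" for s' :: "('f, 'r, 'a) struct"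
    using Inc.hyps(3)[OF that] holds_iff_sat_if_closed[OF Inc.hyps(1)]
    by (auto simp: holds_def)
  with Inc.prems show ?case
    using Inc.hyps(5)[OF reachable_restrict_to_invariant] by auto
qed

theorem theorem4p4:
  fixes P :: "('f, 'r) problem" and T :: "'a itself"
  assumes "safety_problem P"
    and "FI T P"
  shows "safe T P"
proof -
  obtain \<iota> \<tau> \<beta> where P: "P = (\<iota>, \<tau>, \<beta>)" by (cases P)
  show ?thesis
    using assms(2) unfolding P by (intro safe_if_reachable_not_holds FI_reachable_not_holds)
qed

end
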